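(* For any integer $d\ge2$, any $\Gamma\in\mathcal{L}_d$ and any $Q\in\mathcal{R}_d$ we have $|\Gamma_0|\le 2d-2$, $|\Gamma_1|\le 3d-3$, $|Q_0|\le5(d-1)$ and $|Q_1|\le 6(d-1)$. In particular $\mathcal{L}_d$ and $\mathcal{R}_d$ are finite.
   Context: For an undirected multigraph $\Gamma$ (vertex set $\Gamma_0$, edge set $\Gamma_1$), $\chi(\Gamma)=|\Gamma_1|-|\Gamma_0|+(\text{number of connected components})$. A connected graph with at least one edge is prime if it is not the union of two full proper subgraphs having exactly one common vertex. $\mathcal{L}_d$ is the set of prime graphs $\Gamma$ with $\chi(\Gamma)=d$ in which every vertex has valency at least $3$. $\mathcal{R}_d$ is the set of quivers with no oriented cycles obtained from some $\Gamma\in\mathcal{L}_d$ by orienting some of the edges and putting a sink on each remaining edge (replacing it by a path of length two whose two arrows point towards the new middle vertex). *)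

theory Defs
  imports Main
begin

text \<open>An undirected multigraph: a vertex set, an edge set, and for each edge its
  two end points (listed in an arbitrary order, which carries no meaning; loops
  and multiple edges are allowed).\<close>

record ('v, 'e) mgraph =
  verts :: "'v set"
  edges :: "'e set"
  ends  :: "'e \<Rightarrow> 'v \<times> 'v"

definition wf_mgraph :: "('v, 'e) mgraph \<Rightarrow> bool" where
  "wf_mgraph G \<longleftrightarrow> finite (verts G) \<and> finite (edges G) \<and>
     (\<forall>e\<in>edges G. fst (ends G e) \<in> verts G \<and> snd (ends G e) \<in> verts G)"

definition adj :: "('v, 'e) mgraph \<Rightarrow> ('v \<times> 'v) set" where
  "adj G = (\<lambda>e. ends G e) ` edges G \<union> ((\<lambda>e. prod.swap (ends G e)) ` edges G)"

definition conn_rel :: "('v, 'e) mgraph \<Rightarrow> ('v \<times> 'v) set" where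
  "conn_rel G = Id_on (verts G) \<union> (adj G)\<^sup>+"

definition num_components :: "('v, 'e) mgraph \<Rightarrow> nat" where
  "num_components G = card (verts G // conn_rel G)"

definition chi :: "('v, 'e) mgraph \<Rightarrow> int" where
  "chi G = int (card (edges G)) - int (card (verts G)) + int (num_components G)"

text \<open>Valency (degree); a loop counts twice.\<close>
definition valency :: "('v, 'e) mgraph \<Rightarrow> 'v \<Rightarrow> nat" where
  "valency G v = card {e \<in> edges G. fst (ends G e) = v} + card {e \<in> edges G. snd (ends G e) = v}"

definition connected_mg :: "('v, 'e) mgraph \<Rightarrow> bool" where
  "connected_mg G \<longleftrightarrow> verts G \<noteq> {} \<and> (\<forall>u\<in>verts G. \<forall>w\<in>verts G. (u, w) \<in> conn_rel G)"

text \<open>\<open>G\<close> is the union of the two full (induced) proper subgraphs on the vertex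
  sets \<open>A\<close> and \<open>B\<close>, which have exactly one common vertex.\<close>
definition one_point_union :: "('v, 'e) mgraph \<Rightarrow> 'v set \<Rightarrow> 'v set \<Rightarrow> bool" where
  "one_point_union G A B \<longleftrightarrow>
     A \<subseteq> verts G \<and> B \<subseteq> verts G \<and> A \<union> B = verts G \<and> A \<noteq> verts G \<and> B \<noteq> verts G \<and>
     (\<exists>v. A \<inter> B = {v}) \<and>
     (\<forall>e\<in>edges G. (fst (ends G e) \<in> A \<and> snd (ends G e) \<in> A) \<or>
                   (fst (ends G e) \<in> B \<and> snd (ends G e) \<in> B))"

definition prime_mg :: "('v, 'e) mgraph \<Rightarrow> bool" where
  "prime_mg G \<longleftrightarrow> connected_mg G \<and> edges G \<noteq> {} \<and> \<not> (\<exists>A B. one_point_union G A B)"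

definition in_L :: "int \<Rightarrow> ('v, 'e) mgraph \<Rightarrow> bool" where
  "in_L d G \<longleftrightarrow> wf_mgraph G \<and> prime_mg G \<and> chi G = d \<and> (\<forall>v\<in>verts G. valency G v \<ge> 3)"

definition mg_iso :: "('v, 'e) mgraph \<Rightarrow> ('w, 'f) mgraph \<Rightarrow> bool" where
  "mg_iso G H \<longleftrightarrow> (\<exists>f g. bij_betw f (verts G) (verts H) \<and> bij_betw g (edges G) (edges H) \<and>
     (\<forall>e\<in>edges G. ends H (g e) = map_prod f f (ends G e) \<or>
                   ends H (g e) = prod.swap (map_prod f f (ends G e))))"

record ('q, 'a) quiver =
  qverts :: "'q set"
  arrows :: "'a set"
  qsrc   :: "'a \<Rightarrow> 'q"
  qtgt   :: "'a \<Rightarrow> 'q"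

definition arrow_rel :: "('q, 'a) quiver \<Rightarrow> ('q \<times> 'q) set" where
  "arrow_rel Q = (\<lambda>a. (qsrc Q a, qtgt Q a)) ` arrows Q"

definition no_oriented_cycles :: "('q, 'a) quiver \<Rightarrow> bool" where
  "no_oriented_cycles Q \<longleftrightarrow> acyclic (arrow_rel Q)"

definition quiver_iso :: "('q, 'a) quiver \<Rightarrow> ('r, 'b) quiver \<Rightarrow> bool" where
  "quiver_iso Q P \<longleftrightarrow> (\<exists>f g. bij_betw f (qverts Q) (qverts P) \<and> bij_betw g (arrows Q) (arrows P) \<and>
     (\<forall>a\<in>arrows Q. qsrc P (g a) = f (qsrc Q a) \<and> qtgt P (g a) = f (qtgt Q a)))"

text \<open>The quiver obtained from \<open>G\<close> by orienting the edges in \<open>Or\<close> (edge \<open>e\<close> points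
  from \<open>fst (ends G e)\<close> to \<open>snd (ends G e)\<close> if \<open>dir e\<close>, otherwise the other way) and
  putting a sink on every remaining edge \<open>e\<close>: a new vertex \<open>Inr e\<close> with the two
  arrows \<open>(e, True)\<close> and \<open>(e, False)\<close> pointing from the two ends of \<open>e\<close> to it.\<close>
definition sink_quiver :: "('v, 'e) mgraph \<Rightarrow> 'e set \<Rightarrow> ('e \<Rightarrow> bool) \<Rightarrow> ('v + 'e, 'e \<times> bool) quiver" where
  "sink_quiver G Or dir =
     \<lparr> qverts = Inl ` verts G \<union> Inr ` (edges G - Or),
       arrows = (\<lambda>e. (e, True)) ` edges G \<union> (\<lambda>e. (e, False)) ` (edges G - Or),
       qsrc = (\<lambda>(e, b). if e \<in> Or then Inl (if dir e then fst (ends G e) else snd (ends G e))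
                        else Inl (if b then fst (ends G e) else snd (ends G e))),
       qtgt = (\<lambda>(e, b). if e \<in> Or then Inl (if dir e then snd (ends G e) else fst (ends G e))
                        else Inr e) \<rparr>"

text \<open>\<open>Q\<close> is obtained (literally) from some graph of \<open>\<L>_d\<close>; membership in \<open>\<R>_d\<close>
  means being isomorphic to such a quiver.\<close>
definition R_construction :: "int \<Rightarrow> ('v, 'e) mgraph \<Rightarrow> 'e set \<Rightarrow> ('e \<Rightarrow> bool) \<Rightarrow> bool" where
  "R_construction d G Or dir \<longleftrightarrow> in_L d G \<and> Or \<subseteq> edges G \<and> no_oriented_cycles (sink_quiver G Or dir)"

end

theory Submission imports Defs "HOL-Library.FuncSet" begin

text \<open>A prime graph is connected, so \<open>\<chi>(\<Gamma>) = |\<Gamma>\<^sub>1| - |\<Gamma>\<^sub>0| + 1\<close>. The handshake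
  lemma together with valency at least 3 gives \<open>3 |\<Gamma>\<^sub>0| \<le> 2 |\<Gamma>\<^sub>1|\<close>, and the two
  relations yield \<open>|\<Gamma>\<^sub>0| \<le> 2(d - 1)\<close> and \<open>|\<Gamma>\<^sub>1| \<le> 3(d - 1)\<close>. Replacing an edge by a
  sink adds one vertex and one arrow, so \<open>|Q\<^sub>0| \<le> |\<Gamma>\<^sub>0| + |\<Gamma>\<^sub>1|\<close> and
  \<open>|Q\<^sub>1| \<le> 2 |\<Gamma>\<^sub>1|\<close>. Finiteness up to isomorphism follows because a graph or quiver of
  bounded size can be relabelled onto initial segments of \<open>\<nat>\<close>, and there are only
  finitely many structures on those.\<close>

lemma sum_card_fibres:
  assumes "finite E" "finite V" "\<forall>e\<in>E. h e \<in> V"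
  shows "(\<Sum>v\<in>V. card {e\<in>E. h e = v}) = card E"
proof -
  have "(\<Sum>v\<in>V. \<Sum>e\<in>{e\<in>E. h e = v}. (1::nat)) = (\<Sum>e\<in>E. 1)"
    by (rule sum.group) (use assms in auto)
  then show ?thesis by simp
qed

lemma adj_subset_verts:
  assumes "wf_mgraph G"
  shows "adj G \<subseteq> verts G \<times> verts G"
  using assms unfolding adj_def wf_mgraph_def
  by (auto simp: prod.swap_def) (metis fst_conv snd_conv)+

lemma num_components_connected:
  assumes "wf_mgraph G" "connected_mg G"
  shows "num_components G = 1"
proof -
  have "(adj G)\<^sup>+ \<subseteq> verts G \<times> verts G"
    using adj_subset_verts[OF assms(1)] trancl_subset_Sigma by blast
  then have "conn_rel G \<subseteq> verts G \<times> verts G"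
    unfolding conn_rel_def by auto
  with assms(2) have "\<forall>x\<in>verts G. conn_rel G `` {x} = verts G"
    unfolding connected_mg_def by blast
  with assms(2) have "verts G // conn_rel G = {verts G}"
    unfolding quotient_def connected_mg_def by auto
  then show ?thesis
    unfolding num_components_def by simp
qed

lemma chi_connected:
  assumes "wf_mgraph G" "connected_mg G"
  shows "chi G = int (card (edges G)) - int (card (verts G)) + 1"
  using num_components_connected[OF assms] unfolding chi_def by simp

lemma sum_valency:
  assumes "wf_mgraph G"
  shows "(\<Sum>v\<in>verts G. valency G v) = 2 * card (edges G)"
proof -
  have fin: "finite (edges G)" "finite (verts G)"
    and ends: "\<forall>e\<in>edges G. fst (ends G e) \<in> verts G \<and> snd (ends G e) \<in> verts G"
    using assms unfolding wf_mgraph_def by auto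
  show ?thesis
    unfolding valency_def sum.distrib
    using sum_card_fibres[OF fin, of "\<lambda>e. fst (ends G e)"]
      sum_card_fibres[OF fin, of "\<lambda>e. snd (ends G e)"] ends
    by auto
qed

lemma card_verts_le_if_valency_ge_3:
  assumes "wf_mgraph G" "\<forall>v\<in>verts G. valency G v \<ge> 3"
  shows "3 * card (verts G) \<le> 2 * card (edges G)"
proof -
  have "3 * card (verts G) = (\<Sum>v\<in>verts G. 3)"
    by simp
  also have "\<dots> \<le> (\<Sum>v\<in>verts G. valency G v)"
    using assms(2) by (intro sum_mono) auto
  also have "\<dots> = 2 * card (edges G)"
    using sum_valency[OF assms(1)] .
  finally show ?thesis .
qed

lemma in_L_card_bounds:
  assumes "in_L d G"
  shows "int (card (verts G)) \<le> 2 * d - 2" "int (card (edges G)) \<le> 3 * d - 3"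
proof -
  have wf: "wf_mgraph G" and conn: "connected_mg G"
    using assms unfolding in_L_def prime_mg_def by auto
  have "d = int (card (edges G)) - int (card (verts G)) + 1"
    using assms chi_connected[OF wf conn] unfolding in_L_def by simp
  moreover have "3 * card (verts G) \<le> 2 * card (edges G)"
    using assms card_verts_le_if_valency_ge_3[OF wf] unfolding in_L_def by blast
  ultimately show "int (card (verts G)) \<le> 2 * d - 2" "int (card (edges G)) \<le> 3 * d - 3"
    by linarith+
qed

lemma card_qverts_sink_quiver_le:
  fixes G :: "('v, 'e) mgraph"
  assumes "wf_mgraph G"
  shows "card (qverts (sink_quiver G Or dir)) \<le> card (verts G) + card (edges G)"
proof -
  have fin: "finite (verts G)" "finite (edges G)"
    using assms unfolding wf_mgraph_def by auto
  have "card (qverts (sink_quiver G Or dir))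
      \<le> card (Inl ` verts G :: ('v + 'e) set) + card (Inr ` (edges G - Or) :: ('v + 'e) set)"
    unfolding sink_quiver_def by (simp add: card_Un_le)
  also have "\<dots> \<le> card (verts G) + card (edges G)"
    using fin by (intro add_mono card_image_le order.trans[OF card_image_le]) (auto intro: card_mono)
  finally show ?thesis .
qed

lemma card_arrows_sink_quiver_le:
  assumes "wf_mgraph G"
  shows "card (arrows (sink_quiver G Or dir)) \<le> 2 * card (edges G)"
proof -
  have fin: "finite (edges G)"
    using assms unfolding wf_mgraph_def by auto
  have "card (arrows (sink_quiver G Or dir))
      \<le> card ((\<lambda>e. (e, True)) ` edges G) + card ((\<lambda>e. (e, False)) ` (edges G - Or))"
    unfolding sink_quiver_def by (simp add: card_Un_le)
  also have "\<dots> \<le> card (edges G) + card (edges G)"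
    using fin by (intro add_mono card_image_le order.trans[OF card_image_le]) (auto intro: card_mono)
  finally show ?thesis by simp
qed

lemma sink_quiver_wf:
  assumes "wf_mgraph G"
  shows "finite (qverts (sink_quiver G Or dir))" "finite (arrows (sink_quiver G Or dir))"
    "\<forall>a\<in>arrows (sink_quiver G Or dir).
       qsrc (sink_quiver G Or dir) a \<in> qverts (sink_quiver G Or dir) \<and>
       qtgt (sink_quiver G Or dir) a \<in> qverts (sink_quiver G Or dir)"
  using assms unfolding wf_mgraph_def sink_quiver_def by auto

lemma R_construction_card_bounds:
  assumes "R_construction d G Or dir"
  shows "int (card (qverts (sink_quiver G Or dir))) \<le> 5 * (d - 1)"
    "int (card (arrows (sink_quiver G Or dir))) \<le> 6 * (d - 1)"
proof -
  have L: "in_L d G"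
    using assms unfolding R_construction_def by auto
  then have wf: "wf_mgraph G"
    unfolding in_L_def by auto
  have "int (card (qverts (sink_quiver G Or dir))) \<le> int (card (verts G)) + int (card (edges G))"
    using card_qverts_sink_quiver_le[OF wf, of Or dir] by linarith
  then show "int (card (qverts (sink_quiver G Or dir))) \<le> 5 * (d - 1)"
    using in_L_card_bounds[OF L] by (simp add: algebra_simps)
  have "int (card (arrows (sink_quiver G Or dir))) \<le> 2 * int (card (edges G))"
    using card_arrows_sink_quiver_le[OF wf, of Or dir] by linarith
  then show "int (card (arrows (sink_quiver G Or dir))) \<le> 6 * (d - 1)"
    using in_L_card_bounds[OF L] by (simp add: algebra_simps)
qed

definition nat_mgraphs :: "nat \<Rightarrow> nat \<Rightarrow> (nat, nat) mgraph set" where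
  "nat_mgraphs N M = (\<lambda>(V, E, f). \<lparr>verts = V, edges = E, ends = f\<rparr>) `
     (Pow {..<N} \<times> Sigma (Pow {..<M}) (\<lambda>E. E \<rightarrow>\<^sub>E {..<N} \<times> {..<N}))"

lemma finite_nat_mgraphs: "finite (nat_mgraphs N M)"
  unfolding nat_mgraphs_def
  by (intro finite_imageI finite_cartesian_product finite_SigmaI finite_PiE) (auto intro: finite_subset)

lemma mg_iso_nat_mgraphs:
  assumes "wf_mgraph G" "card (verts G) \<le> N" "card (edges G) \<le> M"
  shows "\<exists>H\<in>nat_mgraphs N M. mg_iso G H"
proof -
  have fin: "finite (verts G)" "finite (edges G)"
    and ends: "\<forall>e\<in>edges G. fst (ends G e) \<in> verts G \<and> snd (ends G e) \<in> verts G"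
    using assms(1) unfolding wf_mgraph_def by auto
  obtain f where f: "bij_betw f (verts G) {0..<card (verts G)}"
    using ex_bij_betw_finite_nat[OF fin(1)] by blast
  obtain g where g: "bij_betw g (edges G) {0..<card (edges G)}"
    using ex_bij_betw_finite_nat[OF fin(2)] by blast
  define h where
    "h = restrict (\<lambda>k. map_prod f f (ends G (inv_into (edges G) g k))) {0..<card (edges G)}"
  define H where "H = \<lparr>verts = {0..<card (verts G)}, edges = {0..<card (edges G)}, ends = h\<rparr>"
  have edge: "inv_into (edges G) g k \<in> edges G" if "k < card (edges G)" for k
    using g that by (metis atLeastLessThan_iff bij_betw_def inv_into_into zero_le)
  have vert: "f v < N" if "v \<in> verts G" for v
    using f that bij_betwE assms(2) by fastforce
  have "map_prod f f (ends G (inv_into (edges G) g k)) \<in> {..<N} \<times> {..<N}"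
    if "k < card (edges G)" for k
    using vert ends edge[OF that] by (cases "ends G (inv_into (edges G) g k)") auto
  then have "h \<in> {0..<card (edges G)} \<rightarrow>\<^sub>E {..<N} \<times> {..<N}"
    unfolding h_def by auto
  then have "H \<in> nat_mgraphs N M"
    unfolding nat_mgraphs_def H_def using assms(2,3)
    by (intro image_eqI[where x="({0..<card (verts G)}, {0..<card (edges G)}, h)"]) auto
  moreover have "mg_iso G H"
    unfolding mg_iso_def
  proof (intro exI conjI ballI disjI1)
    show "bij_betw f (verts G) (verts H)" "bij_betw g (edges G) (edges H)"
      using f g unfolding H_def by simp_all
    fix e assume e: "e \<in> edges G"
    have "g e < card (edges G)" "inv_into (edges G) g (g e) = e"
      using g e bij_betwE bij_betw_inv_into_left by fastforce+
    then show "ends H (g e) = map_prod f f (ends G e)"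
      unfolding H_def h_def by simp
  qed
  ultimately show ?thesis by blast
qed

definition nat_quivers :: "nat \<Rightarrow> nat \<Rightarrow> (nat, nat) quiver set" where
  "nat_quivers N M = (\<lambda>(V, A, s, t). \<lparr>qverts = V, arrows = A, qsrc = s, qtgt = t\<rparr>) `
     (Pow {..<N} \<times> Sigma (Pow {..<M}) (\<lambda>A. (A \<rightarrow>\<^sub>E {..<N}) \<times> (A \<rightarrow>\<^sub>E {..<N})))"

lemma finite_nat_quivers: "finite (nat_quivers N M)"
  unfolding nat_quivers_def
  by (intro finite_imageI finite_cartesian_product finite_SigmaI finite_PiE) (auto intro: finite_subset)

lemma quiver_iso_nat_quivers:
  assumes fin: "finite (qverts Q)" "finite (arrows Q)"
    and ends: "\<forall>a\<in>arrows Q. qsrc Q a \<in> qverts Q \<and> qtgt Q a \<in> qverts Q"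
    and card: "card (qverts Q) \<le> N" "card (arrows Q) \<le> M"
  shows "\<exists>P\<in>nat_quivers N M. quiver_iso Q P"
proof -
  obtain f where f: "bij_betw f (qverts Q) {0..<card (qverts Q)}"
    using ex_bij_betw_finite_nat[OF fin(1)] by blast
  obtain g where g: "bij_betw g (arrows Q) {0..<card (arrows Q)}"
    using ex_bij_betw_finite_nat[OF fin(2)] by blast
  define s where "s = restrict (\<lambda>k. f (qsrc Q (inv_into (arrows Q) g k))) {0..<card (arrows Q)}"
  define t where "t = restrict (\<lambda>k. f (qtgt Q (inv_into (arrows Q) g k))) {0..<card (arrows Q)}"
  define P where
    "P = \<lparr>qverts = {0..<card (qverts Q)}, arrows = {0..<card (arrows Q)}, qsrc = s, qtgt = t\<rparr>"
  have arrow: "inv_into (arrows Q) g k \<in> arrows Q" if "k < card (arrows Q)" for k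
    using g that by (metis atLeastLessThan_iff bij_betw_def inv_into_into zero_le)
  have vert: "f x < N" if "x \<in> qverts Q" for x
    using f that bij_betwE card(1) by fastforce
  have "s \<in> {0..<card (arrows Q)} \<rightarrow>\<^sub>E {..<N}" "t \<in> {0..<card (arrows Q)} \<rightarrow>\<^sub>E {..<N}"
    unfolding s_def t_def using arrow vert ends by auto
  then have "P \<in> nat_quivers N M"
    unfolding nat_quivers_def P_def using card
    by (intro image_eqI[where x="({0..<card (qverts Q)}, {0..<card (arrows Q)}, s, t)"]) auto
  moreover have "quiver_iso Q P"
    unfolding quiver_iso_def
  proof (intro exI conjI ballI)
    show "bij_betw f (qverts Q) (qverts P)" "bij_betw g (arrows Q) (arrows P)"
      using f g unfolding P_def by simp_all
    fix a assume a: "a \<in> arrows Q"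
    have "g a < card (arrows Q)" "inv_into (arrows Q) g (g a) = a"
      using g a bij_betwE bij_betw_inv_into_left by fastforce+
    then show "qsrc P (g a) = f (qsrc Q a)" "qtgt P (g a) = f (qtgt Q a)"
      unfolding P_def s_def t_def by simp_all
  qed
  ultimately show ?thesis by blast
qed

theorem proposition4p15:
  fixes d :: int
  assumes "d \<ge> 2"
  shows "(\<forall>G :: ('v, 'e) mgraph. in_L d G \<longrightarrow>
            int (card (verts G)) \<le> 2 * d - 2 \<and> int (card (edges G)) \<le> 3 * d - 3)
       \<and> (\<forall>(G :: ('v, 'e) mgraph) Or dir. R_construction d G Or dir \<longrightarrow>
            int (card (qverts (sink_quiver G Or dir))) \<le> 5 * (d - 1) \<and>
            int (card (arrows (sink_quiver G Or dir))) \<le> 6 * (d - 1))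
       \<and> (\<exists>F :: (nat, nat) mgraph set. finite F \<and>
            (\<forall>G :: ('v, 'e) mgraph. in_L d G \<longrightarrow> (\<exists>H\<in>F. mg_iso G H)))
       \<and> (\<exists>F :: (nat, nat) quiver set. finite F \<and>
            (\<forall>(G :: ('v, 'e) mgraph) Or dir. R_construction d G Or dir \<longrightarrow>
               (\<exists>P\<in>F. quiver_iso (sink_quiver G Or dir) P)))"
proof (intro conjI)
  show "\<exists>F :: (nat, nat) mgraph set. finite F \<and>
          (\<forall>G :: ('v, 'e) mgraph. in_L d G \<longrightarrow> (\<exists>H\<in>F. mg_iso G H))"
  proof (intro exI[of _ "nat_mgraphs (nat (2 * d - 2)) (nat (3 * d - 3))"] conjI allI impI)
    fix G :: "('v, 'e) mgraph"
    assume L: "in_L d G"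
    then have wf: "wf_mgraph G"
      unfolding in_L_def by simp
    show "\<exists>H\<in>nat_mgraphs (nat (2 * d - 2)) (nat (3 * d - 3)). mg_iso G H"
      using wf in_L_card_bounds[OF L] by (intro mg_iso_nat_mgraphs) (simp_all add: le_nat_iff)
  qed (rule finite_nat_mgraphs)
  show "\<exists>F :: (nat, nat) quiver set. finite F \<and>
          (\<forall>(G :: ('v, 'e) mgraph) Or dir. R_construction d G Or dir \<longrightarrow>
             (\<exists>P\<in>F. quiver_iso (sink_quiver G Or dir) P))"
  proof (intro exI[of _ "nat_quivers (nat (5 * (d - 1))) (nat (6 * (d - 1)))"] conjI allI impI)
    fix G :: "('v, 'e) mgraph" and Or dir
    assume R: "R_construction d G Or dir"
    then have wf: "wf_mgraph G"
      unfolding R_construction_def in_L_def by auto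
    show "\<exists>P\<in>nat_quivers (nat (5 * (d - 1))) (nat (6 * (d - 1))). quiver_iso (sink_quiver G Or dir) P"
      using R_construction_card_bounds[OF R] sink_quiver_wf[OF wf, of Or dir]
      by (intro quiver_iso_nat_quivers) (auto simp: le_nat_iff)
  qed (rule finite_nat_quivers)
qed (use in_L_card_bounds R_construction_card_bounds in auto)

end
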